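(* Let $A=\{0,1,2\}$ and let $T\colon A^4\to A$ be given by $T(1,1,2,2)=T(1,2,1,2)=1$ and $T(\mathbf{x})=0$ for all other $\mathbf{x}\in A^4$. For $a\in A$ let $z_a\colon A^2\to A$ be given by $z_a(2,2)=a$ and $z_a(x,y)=0$ otherwise, and for $a,b,c,d,e\in A$ let $f_{a,(b,c,d,e)}\colon A^2\to A$ be given by $f(0,2)=b$, $f(1,2)=c$, $f(2,0)=d$, $f(2,1)=e$, $f(2,2)=a$ and $f(x,y)=0$ for $(x,y)\in\{0,1\}^2$. Then $\{T\}^{*(2)}$ consists of exactly the following 65 functions: \[\{T\}^{*(2)}=\{e^2_1,e^2_2\}\ \dot\cup\ \{z_a : a\in\{0,1,2\}\}\ \dot\cup\ \bigcup_{c\in\{1,2\}}\{f_{a,\mathbf{x}} : a\in\{0,c\},\ \mathbf{x}\in\{0,c\}^4\setminus\{(0,0,0,0)\}\},\] where $e^2_1(x,y)=x$ and $e^2_2(x,y)=y$.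
   Context: An $m$-ary $g$ commutes with an $n$-ary $h$ if $g\bigl((h((x_{ij})_{j}))_{i}\bigr)=h\bigl((g((x_{ij})_{i}))_{j}\bigr)$ for all $(x_{ij})\in A^{m\times n}$. For a set $F$ of finitary operations on $A$, $F^*$ is the set of all finitary operations of positive arity commuting with every member of $F$, and $F^{*(2)}$ is the set of binary members of $F^*$. *)

theory Defs
  imports "HOL-Library.Numeral_Type"
begin

text \<open>The base set A = {0,1,2} is the numeral type 3 (elements 0, 1, 2).
  A finitary operation of arity n is represented as a function on lists, read on
  lists of length n.\<close>

type_synonym A = 3

definition commutes :: "nat \<Rightarrow> (A list \<Rightarrow> A) \<Rightarrow> nat \<Rightarrow> (A list \<Rightarrow> A) \<Rightarrow> bool" where
  "commutes m g n h \<longleftrightarrow>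
     (\<forall>x :: nat \<Rightarrow> nat \<Rightarrow> A.
        g (map (\<lambda>i. h (map (\<lambda>j. x i j) [0..<n])) [0..<m])
      = h (map (\<lambda>j. g (map (\<lambda>i. x i j) [0..<m])) [0..<n]))"

definition bin_op :: "(A \<Rightarrow> A \<Rightarrow> A) \<Rightarrow> (A list \<Rightarrow> A)" where
  "bin_op b = (\<lambda>xs. b (xs ! 0) (xs ! 1))"

definition quat_op :: "(A \<Rightarrow> A \<Rightarrow> A \<Rightarrow> A \<Rightarrow> A) \<Rightarrow> (A list \<Rightarrow> A)" where
  "quat_op q = (\<lambda>xs. q (xs ! 0) (xs ! 1) (xs ! 2) (xs ! 3))"

definition T :: "A \<Rightarrow> A \<Rightarrow> A \<Rightarrow> A \<Rightarrow> A" where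
  "T x1 x2 x3 x4 =
     (if (x1, x2, x3, x4) = (1, 1, 2, 2) \<or> (x1, x2, x3, x4) = (1, 2, 1, 2) then 1 else 0)"

definition T_star2 :: "(A \<Rightarrow> A \<Rightarrow> A) set" where
  "T_star2 = {b. commutes 2 (bin_op b) 4 (quat_op T)}"

definition z :: "A \<Rightarrow> A \<Rightarrow> A \<Rightarrow> A" where
  "z a x y = (if x = 2 \<and> y = 2 then a else 0)"

definition f :: "A \<Rightarrow> A \<Rightarrow> A \<Rightarrow> A \<Rightarrow> A \<Rightarrow> A \<Rightarrow> A \<Rightarrow> A" where
  "f a b c d e x y =
     (if x = 0 \<and> y = 2 then b
      else if x = 1 \<and> y = 2 then c
      else if x = 2 \<and> y = 0 then d
      else if x = 2 \<and> y = 1 then e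
      else if x = 2 \<and> y = 2 then a
      else 0)"

end

theory Submission
  imports Defs
begin

text \<open>Feeding columns such as (1,1,2,2), (1,2,1,2) into the commutation identity
  b(T x, T y) = T(b(x_1,y_1), ..., b(x_4,y_4)) gives b(0,0) = 0, and shows that b(1,1) = 1
  forces b to be a projection. Otherwise b vanishes on {0,1}^2, which contains the image
  of T x T, so the identity says that T(b(x_1,y_1), ..., b(x_4,y_4)) is always 0. As T is
  nonzero only on (1,1,2,2) and (1,2,1,2), this holds exactly when b vanishes on {0,1}^2
  and does not take both values 1 and 2. Such operations are parametrised injectively by
  their five values off {0,1}^2, whence 2 + 32 + 32 - 1 = 65.\<close>

lemma A_cases: "(x::A) = 0 \<or> x = 1 \<or> x = 2"
proof (induct x)
  case (of_int z)
  then have "z = 0 \<or> z = 1 \<or> z = 2" by fastforce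
  then show ?case by auto
qed

lemma all_A: "(\<forall>x::A. P x) \<longleftrightarrow> P 0 \<and> P 1 \<and> P 2"
  using A_cases by metis

lemma T_values: "T x1 x2 x3 x4 \<in> {0, 1}"
  by (simp add: T_def)

lemma T_nonzero: "T x1 x2 x3 x4 \<noteq> 0 \<Longrightarrow> x1 = 1 \<and> x4 = 2"
  by (auto simp: T_def split: if_splits)

lemma T_pairs [simp]: "T x x y y = (if x = 1 \<and> y = 2 then 1 else 0)"
  by (auto simp: T_def)

lemma T_interleaved [simp]: "T x y x y = (if x = 1 \<and> y = 2 then 1 else 0)"
  by (auto simp: T_def)

definition commutes_with_T :: "(A \<Rightarrow> A \<Rightarrow> A) \<Rightarrow> bool" where
  "commutes_with_T b \<longleftrightarrow> (\<forall>x1 x2 x3 x4 y1 y2 y3 y4.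
     b (T x1 x2 x3 x4) (T y1 y2 y3 y4) = T (b x1 y1) (b x2 y2) (b x3 y3) (b x4 y4))"

lemma commutes_with_TD:
  "commutes_with_T b \<Longrightarrow>
     b (T x1 x2 x3 x4) (T y1 y2 y3 y4) = T (b x1 y1) (b x2 y2) (b x3 y3) (b x4 y4)"
  unfolding commutes_with_T_def by blast

lemma commutes_quat_op_T_iff: "commutes 2 (bin_op b) 4 (quat_op T) \<longleftrightarrow> commutes_with_T b"
proof -
  have "commutes 2 (bin_op b) 4 (quat_op T) \<longleftrightarrow>
    (\<forall>x :: nat \<Rightarrow> nat \<Rightarrow> A.
       b (T (x 0 0) (x 0 1) (x 0 2) (x 0 3)) (T (x 1 0) (x 1 1) (x 1 2) (x 1 3))
     = T (b (x 0 0) (x 1 0)) (b (x 0 1) (x 1 1)) (b (x 0 2) (x 1 2)) (b (x 0 3) (x 1 3)))"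
    (is "_ \<longleftrightarrow> (\<forall>x. ?hom x)")
    by (simp add: commutes_def bin_op_def quat_op_def upt_rec numeral_2_eq_2 numeral_3_eq_3)
  also have "\<dots> \<longleftrightarrow> commutes_with_T b"
  proof
    assume hom: "\<forall>x. ?hom x"
    show "commutes_with_T b"
      unfolding commutes_with_T_def
    proof (intro allI)
      fix x1 x2 x3 x4 y1 y2 y3 y4
      show "b (T x1 x2 x3 x4) (T y1 y2 y3 y4) = T (b x1 y1) (b x2 y2) (b x3 y3) (b x4 y4)"
        using hom[rule_format, of "\<lambda>i j. [[x1, x2, x3, x4], [y1, y2, y3, y4]] ! i ! j"]
        by simp
    qed
  qed (simp add: commutes_with_T_def)
  finally show ?thesis .
qed

lemma commutes_with_T_flip: "commutes_with_T b \<Longrightarrow> commutes_with_T (\<lambda>x y. b y x)"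
  unfolding commutes_with_T_def by blast

lemma commutes_with_T_projections:
  "commutes_with_T (\<lambda>x y. x)" "commutes_with_T (\<lambda>x y. y)"
  unfolding commutes_with_T_def by simp_all

text \<open>In the paper's notation, vanishing_ops c consists of the z_a and f_{a,x} with all
  parameters in {0, c}.\<close>
definition vanishing_ops :: "A \<Rightarrow> (A \<Rightarrow> A \<Rightarrow> A) set" where
  "vanishing_ops c = {h. (\<forall>x\<in>{0, 1}. \<forall>y\<in>{0, 1}. h x y = 0) \<and> (\<forall>x y. h x y \<in> {0, c})}"

lemma commutes_with_T_vanishing_ops:
  assumes "h \<in> vanishing_ops c"
  shows "commutes_with_T h"
  unfolding commutes_with_T_def
proof (intro allI)
  fix x1 x2 x3 x4 y1 y2 y3 y4
  have "h (T x1 x2 x3 x4) (T y1 y2 y3 y4) = 0"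
    using assms T_values[of x1 x2 x3 x4] T_values[of y1 y2 y3 y4]
    unfolding vanishing_ops_def by blast
  moreover have "T (h x1 y1) (h x2 y2) (h x3 y3) (h x4 y4) = 0"
  proof (rule ccontr)
    assume "T (h x1 y1) (h x2 y2) (h x3 y3) (h x4 y4) \<noteq> 0"
    then have "h x1 y1 = 1" "h x4 y4 = 2" using T_nonzero by blast+
    moreover have "h x1 y1 \<in> {0, c}" "h x4 y4 \<in> {0, c}"
      using assms by (simp_all add: vanishing_ops_def)
    ultimately show False by simp
  qed
  ultimately show "h (T x1 x2 x3 x4) (T y1 y2 y3 y4) = T (h x1 y1) (h x2 y2) (h x3 y3) (h x4 y4)"
    by simp
qed

lemma commutes_with_T_zero:
  "commutes_with_T b \<Longrightarrow> b 0 0 = 0"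
  using commutes_with_TD[of b 0 0 0 0 0 0 0 0] by (simp split: if_splits)

lemma commutes_with_T_first_projection:
  assumes hom: "commutes_with_T b"
    and b11: "b 1 1 = 1" and b12: "b 1 2 = 1" and b21: "b 2 1 = 2" and b22: "b 2 2 = 2"
  shows "b = (\<lambda>x y. x)"
proof -
  note eq = commutes_with_TD[OF hom]
  have b10: "b 1 0 = 1"
    using eq[of 1 1 2 2 2 2 1 1] b12 b21 by (simp add: T_def)
  have b20: "b 2 0 = 2"
    using eq[of 1 1 2 2 1 1 0 0] b10 b11 by (simp add: T_def split: if_splits)
  have b01: "b 0 1 = 0"
    using eq[of 2 2 2 2 1 1 2 2] b21 b22 by (simp add: T_def)
  have "b 0 2 \<noteq> 2"
    using eq[of 1 0 1 0 1 2 1 2] b01 b11 by (simp split: if_splits)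
  moreover have "b 0 2 \<noteq> 1"
    using eq[of 0 0 2 2 2 2 2 2] commutes_with_T_zero[OF hom] b22 by (simp split: if_splits)
  ultimately have b02: "b 0 2 = 0"
    using A_cases by blast
  show ?thesis
    using commutes_with_T_zero[OF hom] b01 b02 b10 b11 b12 b20 b21 b22
    by (simp add: fun_eq_iff all_A)
qed

lemma commutes_with_T_projection_cases:
  assumes hom: "commutes_with_T b" and b11: "b 1 1 = 1"
  shows "b = (\<lambda>x y. x) \<or> b = (\<lambda>x y. y)"
proof -
  have "T 1 (b 1 2) (b 2 1) (b 2 2) = 1"
    using commutes_with_TD[OF hom, of 1 1 2 2 1 2 1 2] b11 by (simp add: T_def)
  then consider "b 1 2 = 1" "b 2 1 = 2" "b 2 2 = 2" | "b 1 2 = 2" "b 2 1 = 1" "b 2 2 = 2"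
    by (auto simp: T_def split: if_splits)
  then show ?thesis
  proof cases
    case 1
    then show ?thesis using commutes_with_T_first_projection[OF hom b11] by blast
  next
    case 2
    then have "(\<lambda>x y. b y x) = (\<lambda>x y. x)"
      using commutes_with_T_first_projection[OF commutes_with_T_flip[OF hom]] b11 by simp
    then have "b = (\<lambda>x y. y)"
      by (metis (no_types))
    then show ?thesis ..
  qed
qed

lemma commutes_with_T_vanishes_on_01:
  assumes hom: "commutes_with_T b" and b11: "b 1 1 \<noteq> 1"
  shows "\<forall>x\<in>{0, 1}. \<forall>y\<in>{0, 1}. b x y = 0"
proof -
  note eq = commutes_with_TD[OF hom]
  have "b 1 0 = 0"
    using eq[of 1 1 2 2 1 1 0 0] b11 by simp
  moreover have "b 0 1 = 0"
    using eq[of 1 0 1 0 1 2 1 2] b11 by simp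
  moreover have "b 1 1 = 0"
    using eq[of 1 1 2 2 1 2 1 2] T_values b11 by (simp add: T_def)
  ultimately show ?thesis
    using commutes_with_T_zero[OF hom] by simp
qed

lemma commutes_with_T_not_1_and_2:
  assumes hom: "commutes_with_T b" and vanish: "\<forall>x\<in>{0, 1}. \<forall>y\<in>{0, 1}. b x y = 0"
  shows "b p q \<noteq> 1 \<or> b r s \<noteq> 2"
proof (rule ccontr)
  assume "\<not> (b p q \<noteq> 1 \<or> b r s \<noteq> 2)"
  then have "b (T p p r r) (T q q s s) = 1"
    using commutes_with_TD[OF hom, of p p r r q q s s] by simp
  moreover have "b (T p p r r) (T q q s s) = 0"
    using vanish T_values by blast
  ultimately show False by simp
qed

lemma commutes_with_T_cases:
  assumes hom: "commutes_with_T b"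
  shows "b \<in> {\<lambda>x y. x, \<lambda>x y. y} \<union> vanishing_ops 1 \<union> vanishing_ops 2"
proof (cases "b 1 1 = 1")
  case True
  then show ?thesis using commutes_with_T_projection_cases[OF hom] by blast
next
  case False
  note vanish = commutes_with_T_vanishes_on_01[OF hom False]
  show ?thesis
  proof (cases "\<exists>x y. b x y = 1")
    case True
    then have "\<forall>x y. b x y \<in> {0, 1}"
      using commutes_with_T_not_1_and_2[OF hom vanish] A_cases by blast
    then have "b \<in> vanishing_ops 1"
      using vanish by (simp add: vanishing_ops_def)
    then show ?thesis by blast
  next
    case False
    then have "\<forall>x y. b x y \<in> {0, 2}"
      using A_cases by blast
    then have "b \<in> vanishing_ops 2"
      using vanish by (simp add: vanishing_ops_def)
    then show ?thesis by blast
  qed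
qed

lemma T_star2_eq_ops: "T_star2 = {\<lambda>x y. x, \<lambda>x y. y} \<union> vanishing_ops 1 \<union> vanishing_ops 2"
  unfolding T_star2_def commutes_quat_op_T_iff
  using commutes_with_T_cases commutes_with_T_projections commutes_with_T_vanishing_ops
  by blast

definition f_tupled :: "A \<times> A \<times> A \<times> A \<times> A \<Rightarrow> A \<Rightarrow> A \<Rightarrow> A" where
  "f_tupled = (\<lambda>(a, b, c, d, e). f a b c d e)"

lemma inj_f_tupled: "inj f_tupled"
proof (rule injI)
  fix p q
  assume eq: "f_tupled p = f_tupled q"
  obtain a b c d e where p: "p = (a, b, c, d, e)" by (cases p)
  obtain a' b' c' d' e' where q: "q = (a', b', c', d', e')" by (cases q)
  have "f a b c d e x y = f a' b' c' d' e' x y" for x y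
    using eq by (simp add: f_tupled_def p q)
  from this[of 2 2] this[of 0 2] this[of 1 2] this[of 2 0] this[of 2 1]
  show "p = q" by (simp add: f_def p q)
qed

lemma vanishing_ops_eq_image:
  "vanishing_ops c = f_tupled ` ({0, c} \<times> {0, c} \<times> {0, c} \<times> {0, c} \<times> {0, c})"
proof (intro set_eqI iffI)
  fix h
  assume h: "h \<in> vanishing_ops c"
  then have "h = f_tupled (h 2 2, h 0 2, h 1 2, h 2 0, h 2 1)"
    by (simp add: vanishing_ops_def f_tupled_def f_def fun_eq_iff all_A)
  moreover have "(h 2 2, h 0 2, h 1 2, h 2 0, h 2 1) \<in> {0, c} \<times> {0, c} \<times> {0, c} \<times> {0, c} \<times> {0, c}"
    using h unfolding vanishing_ops_def by blast
  ultimately show "h \<in> f_tupled ` ({0, c} \<times> {0, c} \<times> {0, c} \<times> {0, c} \<times> {0, c})" ..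
qed (auto simp: vanishing_ops_def f_tupled_def f_def)

lemma vanishing_ops_split:
  "vanishing_ops c = {z a | a. a \<in> {0, c}}
     \<union> {f a b c' d e | a b c' d e.
          a \<in> {0, c} \<and> b \<in> {0, c} \<and> c' \<in> {0, c} \<and> d \<in> {0, c} \<and> e \<in> {0, c}
          \<and> (b, c', d, e) \<noteq> (0, 0, 0, 0)}"
proof -
  have z_eq_f: "z a = f a 0 0 0 0" for a
    by (simp add: z_def f_def fun_eq_iff)
  have "vanishing_ops c = {f a b c' d e | a b c' d e.
          a \<in> {0, c} \<and> b \<in> {0, c} \<and> c' \<in> {0, c} \<and> d \<in> {0, c} \<and> e \<in> {0, c}}"
    unfolding vanishing_ops_eq_image f_tupled_def image_def mem_Sigma_iff Bex_def by fast
  then show ?thesis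
    unfolding z_eq_f by blast
qed

lemma card_vanishing_ops: "card (vanishing_ops 1 \<union> vanishing_ops 2) = 63"
proof -
  let ?P = "\<lambda>c::A. {0, c} \<times> {0, c} \<times> {0, c} \<times> {0, c} \<times> {0, c}"
  have "card (?P 1) + card (?P 2) = card (?P 1 \<union> ?P 2) + card (?P 1 \<inter> ?P 2)"
    by (rule card_Un_Int) simp_all
  moreover have "card (?P 1) = 32" "card (?P 2) = 32"
    by (simp_all add: card_cartesian_product del: insert_Times_insert)
  moreover have "?P 1 \<inter> ?P 2 = {(0, 0, 0, 0, 0)}"
    by auto
  ultimately have "card (?P 1 \<union> ?P 2) = 63"
    by simp
  then show ?thesis
    unfolding vanishing_ops_eq_image image_Un[symmetric]
    by (simp add: card_image inj_on_subset[OF inj_f_tupled] del: insert_Times_insert)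
qed

lemma card_T_star2: "card T_star2 = 65"
proof -
  have "(\<lambda>x y. x) \<noteq> ((\<lambda>x y. y) :: A \<Rightarrow> A \<Rightarrow> A)"
    by (metis zero_neq_one)
  then have "card ({\<lambda>x y. x, \<lambda>x y. y} :: (A \<Rightarrow> A \<Rightarrow> A) set) = 2"
    by simp
  moreover have "card T_star2 =
      card ({\<lambda>x y. x, \<lambda>x y. y} :: (A \<Rightarrow> A \<Rightarrow> A) set) + card (vanishing_ops 1 \<union> vanishing_ops 2)"
    unfolding T_star2_eq_ops Un_assoc
  proof (rule card_Un_disjoint)
    show "finite (vanishing_ops 1 \<union> vanishing_ops 2)"
      using card_vanishing_ops by (simp add: card_ge_0_finite)
    show "{\<lambda>x y. x, \<lambda>x y. y} \<inter> (vanishing_ops 1 \<union> vanishing_ops 2) = {}"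
      by (auto simp: vanishing_ops_def)
  qed simp
  ultimately show ?thesis
    using card_vanishing_ops by simp
qed

theorem lemma3p4:
  shows "T_star2 =
           {(\<lambda>x y. x), (\<lambda>x y. y)}
         \<union> {z a | a. a \<in> {0, 1, 2}}
         \<union> (\<Union>c\<in>{1, 2}. {f a b c' d e | a b c' d e.
               a \<in> {0, c} \<and> b \<in> {0, c} \<and> c' \<in> {0, c} \<and> d \<in> {0, c} \<and> e \<in> {0, c}
               \<and> (b, c', d, e) \<noteq> (0, 0, 0, 0)})
       \<and> card T_star2 = 65"
proof -
  have "{z a | a. a \<in> {0, 1, 2}} = {z a | a. a \<in> {0, 1}} \<union> {z a | a. a \<in> {0, 2}}"
    by blast
  then show ?thesis
    using card_T_star2 by (simp add: T_star2_eq_ops vanishing_ops_split Un_ac)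
qed

end
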